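(* Let $L$ be a commutative incline with the arithmetic geometric property. Then for every $k\ge 1$ and all $x_1,\dots,x_k\in L$, $$\bigoplus_{i=1}^{k} x_i^{\otimes 2}=\Big(\bigoplus_{i=1}^{k} x_i\Big)^{\otimes 2},$$ where $x^{\otimes 2}=x\otimes x$.
   Context: An incline is a nonempty set $L$ with two binary operations $\oplus,\otimes$ such that $(L,\oplus)$ is a semilattice ($\oplus$ associative, commutative, idempotent), $(L,\otimes)$ is a semigroup, $x\otimes(y\oplus z)=(x\otimes y)\oplus(x\otimes z)$ and $x\oplus(x\otimes y)=x$ for all $x,y,z\in L$. The relation $x\le y\iff x\oplus y=y$ is a partial order with $x\oplus y$ the least upper bound. $L$ is commutative if $\otimes$ is commutative. $L$ has the arithmetic geometric property (AG-property) if $x\otimes y\le (x\otimes x)\oplus(y\otimes y)$ for all $x,y\in L$. *)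

theory Defs
  imports Main
begin

text \<open>An incline on carrier L with operations p (the semilattice join, written oplus)
  and m (the multiplication, written otimes).\<close>
definition incline :: "'a set \<Rightarrow> ('a \<Rightarrow> 'a \<Rightarrow> 'a) \<Rightarrow> ('a \<Rightarrow> 'a \<Rightarrow> 'a) \<Rightarrow> bool" where
  "incline L p m \<longleftrightarrow>
     L \<noteq> {} \<and>
     (\<forall>x\<in>L. \<forall>y\<in>L. p x y \<in> L \<and> m x y \<in> L) \<and>
     (\<forall>x\<in>L. \<forall>y\<in>L. \<forall>z\<in>L. p (p x y) z = p x (p y z)) \<and>
     (\<forall>x\<in>L. \<forall>y\<in>L. p x y = p y x) \<and>
     (\<forall>x\<in>L. p x x = x) \<and>
     (\<forall>x\<in>L. \<forall>y\<in>L. \<forall>z\<in>L. m (m x y) z = m x (m y z)) \<and>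
     (\<forall>x\<in>L. \<forall>y\<in>L. \<forall>z\<in>L. m x (p y z) = p (m x y) (m x z)) \<and>
     (\<forall>x\<in>L. \<forall>y\<in>L. p x (m x y) = x)"

definition commutative_incline :: "'a set \<Rightarrow> ('a \<Rightarrow> 'a \<Rightarrow> 'a) \<Rightarrow> ('a \<Rightarrow> 'a \<Rightarrow> 'a) \<Rightarrow> bool" where
  "commutative_incline L p m \<longleftrightarrow> incline L p m \<and> (\<forall>x\<in>L. \<forall>y\<in>L. m x y = m y x)"

definition incline_le :: "('a \<Rightarrow> 'a \<Rightarrow> 'a) \<Rightarrow> 'a \<Rightarrow> 'a \<Rightarrow> bool" where
  "incline_le p x y \<longleftrightarrow> p x y = y"

definition AG_property :: "'a set \<Rightarrow> ('a \<Rightarrow> 'a \<Rightarrow> 'a) \<Rightarrow> ('a \<Rightarrow> 'a \<Rightarrow> 'a) \<Rightarrow> bool" where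
  "AG_property L p m \<longleftrightarrow> (\<forall>x\<in>L. \<forall>y\<in>L. incline_le p (m x y) (p (m x x) (m y y)))"

fun bigjoin :: "('a \<Rightarrow> 'a \<Rightarrow> 'a) \<Rightarrow> (nat \<Rightarrow> 'a) \<Rightarrow> nat \<Rightarrow> 'a" where
  "bigjoin p x 0 = undefined"
| "bigjoin p x (Suc 0) = x 1"
| "bigjoin p x (Suc (Suc k)) = p (bigjoin p x (Suc k)) (x (Suc (Suc k)))"

end

theory Submission
  imports Defs
begin

text \<open>Distributivity and commutativity give \<open>(a \<oplus> b)\<^sup>2 = a\<^sup>2 \<oplus> ab \<oplus> b\<^sup>2\<close>, and the
  AG-property \<open>ab \<le> a\<^sup>2 \<oplus> b\<^sup>2\<close> absorbs the cross term.\<close>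

lemma commutative_incline_square_join:
  assumes ci: "commutative_incline L p m" and ag: "AG_property L p m"
    and a: "a \<in> L" and b: "b \<in> L"
  shows "m (p a b) (p a b) = p (m a a) (m b b)"
proof -
  have I: "incline L p m" and mc: "\<forall>x\<in>L. \<forall>y\<in>L. m x y = m y x"
    using ci by (auto simp: commutative_incline_def)
  have closed: "\<And>x y. x \<in> L \<Longrightarrow> y \<in> L \<Longrightarrow> p x y \<in> L \<and> m x y \<in> L"
    and p_assoc: "\<And>x y z. x \<in> L \<Longrightarrow> y \<in> L \<Longrightarrow> z \<in> L \<Longrightarrow> p (p x y) z = p x (p y z)"
    and p_comm: "\<And>x y. x \<in> L \<Longrightarrow> y \<in> L \<Longrightarrow> p x y = p y x"
    and p_idem: "\<And>x. x \<in> L \<Longrightarrow> p x x = x"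
    and distrib: "\<And>x y z. x \<in> L \<Longrightarrow> y \<in> L \<Longrightarrow> z \<in> L \<Longrightarrow> m x (p y z) = p (m x y) (m x z)"
    using I by (auto simp: incline_def)
  define A B C where "A = m a a" and "B = m b b" and "C = m a b"
  have L: "A \<in> L" "B \<in> L" "C \<in> L" "p a b \<in> L"
    using closed a b by (auto simp: A_def B_def C_def)
  have cross_le: "p C (p A B) = p A B"
    using ag a b by (simp add: AG_property_def incline_le_def A_def B_def C_def)
  have "m (p a b) (p a b) = p (m a (p a b)) (m b (p a b))"
    using distrib mc L(4) a b by metis
  also have "\<dots> = p (p A C) (p C B)"
    using distrib mc a b by (simp add: A_def B_def C_def)
  also have "\<dots> = p A (p C B)"
    using p_assoc[of C C B] p_assoc[of A C "p C B"] p_idem L closed by simp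
  also have "\<dots> = p C (p A B)"
    using p_assoc p_comm L by metis
  also have "\<dots> = p A B"
    by (fact cross_le)
  finally show ?thesis by (simp add: A_def B_def)
qed

lemma bigjoin_closed:
  assumes "incline L p m" and "\<forall>i\<in>{1..Suc k}. x i \<in> L"
  shows "bigjoin p x (Suc k) \<in> L"
  using assms(2)
proof (induction k)
  case 0
  then show ?case by simp
next
  case (Suc k)
  then show ?case using assms(1) by (simp add: incline_def)
qed

lemma bigjoin_squares:
  assumes ci: "commutative_incline L p m" and ag: "AG_property L p m"
    and "\<forall>i\<in>{1..Suc n}. x i \<in> L"
  shows "bigjoin p (\<lambda>i. m (x i) (x i)) (Suc n) = m (bigjoin p x (Suc n)) (bigjoin p x (Suc n))"
  using assms(3)
proof (induction n)
  case 0
  then show ?case by simp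
next
  case (Suc n)
  have prefix: "\<forall>i\<in>{1..Suc n}. x i \<in> L"
    using Suc.prems by auto
  have "bigjoin p x (Suc n) \<in> L"
    using bigjoin_closed prefix ci by (auto simp: commutative_incline_def)
  moreover have "x (Suc (Suc n)) \<in> L"
    using Suc.prems by auto
  ultimately show ?case
    using Suc.IH[OF prefix] commutative_incline_square_join[OF ci ag] by simp
qed

theorem mainTheorem2:
  fixes L :: "'a set" and p m :: "'a \<Rightarrow> 'a \<Rightarrow> 'a"
    and k :: nat and x :: "nat \<Rightarrow> 'a"
  assumes "commutative_incline L p m"
    and "AG_property L p m"
    and "k \<ge> 1"
    and "\<forall>i\<in>{1..k}. x i \<in> L"
  shows "bigjoin p (\<lambda>i. m (x i) (x i)) k = m (bigjoin p x k) (bigjoin p x k)"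
proof -
  obtain n where "k = Suc n"
    using assms(3) by (cases k) auto
  then show ?thesis
    using bigjoin_squares[OF assms(1,2)] assms(4) by simp
qed

end
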